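(* Let $K\in\{\mathbb R,\mathbb C,\mathbb H\}$ and let $(E,d)$ be a metric vector space over $K$ such that $d$ is $C_0$-translation invariant and $(C_1,C_2,C_3)$-lipschitz multiplicative. Let $d_0(x,y)=\int_{\mathbb U}d(ux,uy)\,d\mu(u)$, $\delta(x,y)=\lim_{n\to\infty}\frac1n d(nx,ny)$ and $\delta_0(x,y)=\lim_{n\to\infty}\frac1n d_0(nx,ny)$. Then $\delta$ and $\delta_0$ are $C_0$-translation invariant.
   Context: A metric vector space is a topological vector space over $K$ whose topology is generated by the metric $d$. $\mathbb U=\{u\in K:|u|=1\}$, $\mu$ the right-invariant Haar probability measure on $\mathbb U$. A function $\rho$ on $E\times E$ is $C_0$-translation invariant if $\rho(x+z,y+z)\le \rho(x,y)+C_0$ for all $x,y,z$. $(C_1,C_2,C_3)$-lipschitz multiplicative ($C_1\ge1$, $C_2,C_3\ge0$) means $C_1^{-1}|\lambda|d(x,y)-C_2|\lambda|-C_3\le d(\lambda x,\lambda y)\le C_1|\lambda|d(x,y)+C_2|\lambda|+C_3$ for all $\lambda\in K$, $x,y\in E$. (Under these hypotheses the limits defining $\delta,\delta_0$ exist.) *)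

theory Defs
  imports "HOL-Probability.Probability"
begin

definition left_module :: "('k::real_normed_div_algebra \<Rightarrow> 'e::ab_group_add \<Rightarrow> 'e) \<Rightarrow> bool" where
  "left_module sm \<longleftrightarrow>
     (\<forall>a x y. sm a (x + y) = sm a x + sm a y) \<and>
     (\<forall>a b x. sm (a + b) x = sm a x + sm b x) \<and>
     (\<forall>a b x. sm (a * b) x = sm a (sm b x)) \<and>
     (\<forall>x. sm 1 x = x)"

definition metric_vector_space :: "('k::real_normed_div_algebra \<Rightarrow> 'e::{ab_group_add,metric_space} \<Rightarrow> 'e) \<Rightarrow> bool" where
  "metric_vector_space sm \<longleftrightarrow> left_module sm \<and>
     continuous_on UNIV (\<lambda>p::'e \<times> 'e. fst p + snd p) \<and>
     continuous_on UNIV (\<lambda>p::'k \<times> 'e. sm (fst p) (snd p))"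

definition translation_invariant :: "real \<Rightarrow> ('e::plus \<Rightarrow> 'e \<Rightarrow> real) \<Rightarrow> bool" where
  "translation_invariant C0 \<rho> \<longleftrightarrow> (\<forall>x y z. \<rho> (x + z) (y + z) \<le> \<rho> x y + C0)"

definition lipschitz_multiplicative ::
  "('k::real_normed_div_algebra \<Rightarrow> 'e \<Rightarrow> 'e) \<Rightarrow> ('e \<Rightarrow> 'e \<Rightarrow> real) \<Rightarrow> real \<Rightarrow> real \<Rightarrow> real \<Rightarrow> bool" where
  "lipschitz_multiplicative sm d C1 C2 C3 \<longleftrightarrow> C1 \<ge> 1 \<and> C2 \<ge> 0 \<and> C3 \<ge> 0 \<and>
     (\<forall>c x y. inverse C1 * norm c * d x y - C2 * norm c - C3 \<le> d (sm c x) (sm c y) \<and>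
              d (sm c x) (sm c y) \<le> C1 * norm c * d x y + C2 * norm c + C3)"

definition unit_sphere :: "'k::real_normed_div_algebra set" where
  "unit_sphere = {u. norm u = 1}"

definition right_haar_prob :: "'k::real_normed_div_algebra measure \<Rightarrow> bool" where
  "right_haar_prob M \<longleftrightarrow> prob_space M \<and>
     space M = unit_sphere \<and> sets M = sets (restrict_space borel unit_sphere) \<and>
     (\<forall>v\<in>unit_sphere. distr M M (\<lambda>u. u * v) = M)"

definition averaged_metric :: "'k::real_normed_div_algebra measure \<Rightarrow> ('k \<Rightarrow> 'e \<Rightarrow> 'e) \<Rightarrow> ('e \<Rightarrow> 'e \<Rightarrow> real) \<Rightarrow> 'e \<Rightarrow> 'e \<Rightarrow> real" where
  "averaged_metric M sm d x y = (\<integral>u. d (sm u x) (sm u y) \<partial>M)"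

definition asymptotic :: "('k::real_normed_div_algebra \<Rightarrow> 'e \<Rightarrow> 'e) \<Rightarrow> ('e \<Rightarrow> 'e \<Rightarrow> real) \<Rightarrow> 'e \<Rightarrow> 'e \<Rightarrow> real" where
  "asymptotic sm \<rho> x y = lim (\<lambda>n::nat. \<rho> (sm (of_nat n) x) (sm (of_nat n) y) / real n)"

end

theory Submission
  imports Defs
begin

text \<open>Translating by z changes \<rho>(n x, n y) by at most C0 in either direction (translate
  back by -z). After division by n the difference tends to 0, so \<delta> is even exactly
  translation invariant; this needs no existence of the limits, since the two sequences
  then have the same limits. For d0 the pointwise inequality
  d(u(x + z), u(y + z)) \<le> d(u x, u y) + C0 is integrated against the probability measure
  on U; the integrands are integrable because they are continuous in u and bounded on U
  by the Lipschitz bound.\<close>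

lemma lim_eq_if_diff_LIMSEQ_zero:
  fixes a b :: "nat \<Rightarrow> 'a::{topological_ab_group_add,t2_space}"
  assumes "(\<lambda>n. a n - b n) \<longlonglongrightarrow> 0"
  shows "lim a = lim b"
proof -
  have "(a \<longlonglongrightarrow> L) \<longleftrightarrow> (b \<longlonglongrightarrow> L)" for L
  proof
    assume "a \<longlonglongrightarrow> L"
    from tendsto_diff[OF this assms] show "b \<longlonglongrightarrow> L" by simp
  next
    assume "b \<longlonglongrightarrow> L"
    from tendsto_add[OF this assms] show "a \<longlonglongrightarrow> L" by simp
  qed
  then show ?thesis
    unfolding lim_def by simp
qed

lemma translation_invariant_nonneg:
  fixes \<rho> :: "'a::monoid_add \<Rightarrow> 'a \<Rightarrow> real"
  assumes "translation_invariant C0 \<rho>"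
  shows "C0 \<ge> 0"
proof -
  have "\<rho> (0 + 0) (0 + 0) \<le> \<rho> 0 0 + C0"
    using assms unfolding translation_invariant_def by blast
  then show ?thesis by simp
qed

lemma translation_invariant_abs_diff_le:
  fixes \<rho> :: "'a::group_add \<Rightarrow> 'a \<Rightarrow> real"
  assumes "translation_invariant C0 \<rho>"
  shows "\<bar>\<rho> (x + z) (y + z) - \<rho> x y\<bar> \<le> C0"
proof -
  have "\<rho> (x + z) (y + z) \<le> \<rho> x y + C0"
    using assms unfolding translation_invariant_def by blast
  moreover have "\<rho> x y \<le> \<rho> (x + z) (y + z) + C0"
    using assms[unfolded translation_invariant_def, rule_format, where x = "x + z" and y = "y + z" and z = "- z"]
    by (simp add: add.assoc)
  ultimately show ?thesis by linarith
qed

lemma asymptotic_add_right: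
  fixes sm :: "'k::real_normed_div_algebra \<Rightarrow> 'e::ab_group_add \<Rightarrow> 'e"
  assumes ti: "translation_invariant C0 \<rho>"
    and additive: "\<And>c a b. sm c (a + b) = sm c a + sm c b"
  shows "asymptotic sm \<rho> (x + z) (y + z) = asymptotic sm \<rho> x y"
proof -
  let ?P = "\<lambda>n::nat. sm (of_nat n) x" and ?Q = "\<lambda>n::nat. sm (of_nat n) y"
    and ?R = "\<lambda>n::nat. sm (of_nat n) z"
  have "(\<lambda>n. \<rho> (?P n + ?R n) (?Q n + ?R n) / real n - \<rho> (?P n) (?Q n) / real n) \<longlonglongrightarrow> 0"
  proof (rule Lim_null_comparison)
    show "\<forall>\<^sub>F n in sequentially.
        norm (\<rho> (?P n + ?R n) (?Q n + ?R n) / real n - \<rho> (?P n) (?Q n) / real n) \<le> C0 / real n"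
      using translation_invariant_abs_diff_le[OF ti]
      by (intro always_eventually allI) (simp add: diff_divide_distrib[symmetric] divide_right_mono)
  qed (rule lim_const_over_n)
  then show ?thesis
    unfolding asymptotic_def additive by (rule lim_eq_if_diff_LIMSEQ_zero)
qed

lemma translation_invariant_asymptotic:
  fixes sm :: "'k::real_normed_div_algebra \<Rightarrow> 'e::ab_group_add \<Rightarrow> 'e"
  assumes ti: "translation_invariant C0 \<rho>"
    and additive: "\<And>c a b. sm c (a + b) = sm c a + sm c b"
  shows "translation_invariant C0 (asymptotic sm \<rho>)"
  unfolding translation_invariant_def
proof (intro allI)
  fix x y z
  have "asymptotic sm \<rho> (x + z) (y + z) = asymptotic sm \<rho> x y"
    using ti additive by (rule asymptotic_add_right)
  then show "asymptotic sm \<rho> (x + z) (y + z) \<le> asymptotic sm \<rho> x y + C0"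
    using translation_invariant_nonneg[OF ti] by simp
qed

lemma translation_invariant_averaged_metric:
  fixes sm :: "'k::real_normed_div_algebra \<Rightarrow> 'e::ab_group_add \<Rightarrow> 'e"
  assumes "prob_space M"
    and ti: "translation_invariant C0 \<rho>"
    and additive: "\<And>c a b. sm c (a + b) = sm c a + sm c b"
    and integrable: "\<And>x y. integrable M (\<lambda>u. \<rho> (sm u x) (sm u y))"
  shows "translation_invariant C0 (averaged_metric M sm \<rho>)"
  unfolding translation_invariant_def averaged_metric_def
proof (intro allI)
  interpret prob_space M by fact
  fix x y z
  have "\<rho> (sm u (x + z)) (sm u (y + z)) \<le> \<rho> (sm u x) (sm u y) + C0" for u
    using ti unfolding translation_invariant_def additive by blast
  then have "(\<integral>u. \<rho> (sm u (x + z)) (sm u (y + z)) \<partial>M) \<le> (\<integral>u. \<rho> (sm u x) (sm u y) + C0 \<partial>M)"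
    using integrable by (intro integral_mono) auto
  also have "\<dots> = (\<integral>u. \<rho> (sm u x) (sm u y) \<partial>M) + C0"
    using integrable by (simp add: prob_space)
  finally show "(\<integral>u. \<rho> (sm u (x + z)) (sm u (y + z)) \<partial>M) \<le> (\<integral>u. \<rho> (sm u x) (sm u y) \<partial>M) + C0" .
qed

lemma metric_vector_space_additive:
  "metric_vector_space sm \<Longrightarrow> sm c (a + b) = sm c a + sm c b"
  unfolding metric_vector_space_def left_module_def by blast

lemma metric_vector_space_continuous_on_scalar:
  assumes "metric_vector_space sm"
  shows "continuous_on UNIV (\<lambda>u. sm u x)"
proof -
  have action: "continuous_on UNIV (\<lambda>p::_ \<times> _. sm (fst p) (snd p))"
    using assms unfolding metric_vector_space_def by blast
  have "continuous_on UNIV ((\<lambda>p. sm (fst p) (snd p)) \<circ> (\<lambda>u. (u, x)))"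
    by (rule continuous_on_compose) (auto intro!: continuous_intros action[THEN continuous_on_subset])
  then show ?thesis
    by (simp add: o_def)
qed

lemma integrable_dist_scalar_right_haar:
  fixes sm :: "'k::real_normed_div_algebra \<Rightarrow> 'e::{ab_group_add,metric_space} \<Rightarrow> 'e"
  assumes "metric_vector_space sm"
    and "lipschitz_multiplicative sm dist C1 C2 C3"
    and haar: "right_haar_prob M"
  shows "integrable M (\<lambda>u. dist (sm u x) (sm u y))"
proof -
  interpret prob_space M
    using haar unfolding right_haar_prob_def by blast
  have sets: "sets M = sets (restrict_space borel unit_sphere)"
    using haar unfolding right_haar_prob_def by blast
  have "(\<lambda>u. dist (sm u x) (sm u y)) \<in> borel_measurable borel"
    using metric_vector_space_continuous_on_scalar[OF assms(1)]
    by (intro borel_measurable_continuous_onI continuous_intros)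
  then have "(\<lambda>u. dist (sm u x) (sm u y)) \<in> borel_measurable (restrict_space borel unit_sphere)"
    by (rule measurable_restrict_space1)
  then have measurable: "(\<lambda>u. dist (sm u x) (sm u y)) \<in> borel_measurable M"
    unfolding measurable_cong_sets[OF sets refl] .
  have "norm (dist (sm u x) (sm u y)) \<le> C1 * dist x y + C2 + C3" if "u \<in> space M" for u
  proof -
    have "norm u = 1"
      using that haar unfolding right_haar_prob_def unit_sphere_def by simp
    moreover have "dist (sm u x) (sm u y) \<le> C1 * norm u * dist x y + C2 * norm u + C3"
      using assms(2) unfolding lipschitz_multiplicative_def by blast
    ultimately show ?thesis by simp
  qed
  then have "AE u in M. norm (dist (sm u x) (sm u y)) \<le> C1 * dist x y + C2 + C3"
    by (rule AE_I2)
  then show ?thesis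
    using measurable by (rule integrable_const_bound)
qed

theorem lemma3:
  fixes sm :: "'k::real_normed_div_algebra \<Rightarrow> 'e::{ab_group_add,metric_space} \<Rightarrow> 'e"
    and M :: "'k measure"
    and C0 C1 C2 C3 :: real
  assumes "metric_vector_space sm"
    and "translation_invariant C0 (dist :: 'e \<Rightarrow> 'e \<Rightarrow> real)"
    and "lipschitz_multiplicative sm dist C1 C2 C3"
    and "right_haar_prob M"
  shows "translation_invariant C0 (asymptotic sm dist)
     \<and> translation_invariant C0 (asymptotic sm (averaged_metric M sm dist))"
proof -
  have additive: "\<And>c a b. sm c (a + b) = sm c a + sm c b"
    using assms(1) by (rule metric_vector_space_additive)
  have "prob_space M"
    using assms(4) unfolding right_haar_prob_def by blast
  then have averaged: "translation_invariant C0 (averaged_metric M sm dist)"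
    using assms(2) additive integrable_dist_scalar_right_haar[OF assms(1,3,4)]
    by (rule translation_invariant_averaged_metric)
  have "translation_invariant C0 (asymptotic sm dist)"
    using assms(2) additive by (rule translation_invariant_asymptotic)
  moreover have "translation_invariant C0 (asymptotic sm (averaged_metric M sm dist))"
    using averaged additive by (rule translation_invariant_asymptotic)
  ultimately show ?thesis ..
qed

end
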